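(* Let $f$ be a multiplicative function from the positive integers to the nonnegative integers with $f(p^{k-1})\le f(p^k)$ for all primes $p$ and integers $k\ge1$. Then $f$ is convenient if and only if the following holds: for every prime $p$ and every $f$-practical positive integer $m$ with $\gcd(m,p)=1$, the inequality $f(p)\le S_f(m)+1$ implies $f(p^{k+1})\le S_f(mp^k)+1$ for every integer $k\ge0$.
   Context: $f$ multiplicative means $f(1)=1$ and $f(ab)=f(a)f(b)$ for coprime $a,b$. $S_f(n)=\sum_{d\mid n} f(d)$. A positive integer $n$ is $f$-practical if every positive integer $m\le S_f(n)$ equals $\sum_{d\in\mathcal{D}}f(d)$ for some set $\mathcal{D}$ of distinct divisors of $n$. Write $n=p_1^{e_1}\cdots p_k^{e_k}$ with distinct primes ordered so that $f(p_1)\le\cdots\le f(p_k)$, and let $m_i=\prod_{j=1}^{i}p_j^{e_j}$ for $0\le i<k$ ($m_0=1$); $n$ is weakly $f$-practical if $f(p_{i+1})\le S_f(m_i)+1$ for every $0\le i<k$. The function $f$ is called convenient if every weakly $f$-practical number is $f$-practical. *)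

theory Defs
  imports "HOL-Computational_Algebra.Primes"
begin

text \<open>f is a function on the positive integers (value at 0 is irrelevant).\<close>

definition multiplicative :: "(nat \<Rightarrow> nat) \<Rightarrow> bool" where
  "multiplicative f \<longleftrightarrow> f 1 = 1 \<and>
     (\<forall>a b. a > 0 \<longrightarrow> b > 0 \<longrightarrow> coprime a b \<longrightarrow> f (a * b) = f a * f b)"

definition S_f :: "(nat \<Rightarrow> nat) \<Rightarrow> nat \<Rightarrow> nat" where
  "S_f f n = (\<Sum>d\<in>{d. d dvd n}. f d)"

definition f_practical :: "(nat \<Rightarrow> nat) \<Rightarrow> nat \<Rightarrow> bool" where
  "f_practical f n \<longleftrightarrow> n > 0 \<and>
     (\<forall>m. 1 \<le> m \<and> m \<le> S_f f n \<longrightarrow> (\<exists>D. D \<subseteq> {d. d dvd n} \<and> m = (\<Sum>d\<in>D. f d)))"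

definition weakly_f_practical :: "(nat \<Rightarrow> nat) \<Rightarrow> nat \<Rightarrow> bool" where
  "weakly_f_practical f n \<longleftrightarrow> n > 0 \<and>
     (\<forall>ps. distinct ps \<and> set ps = prime_factors n \<and> sorted_wrt (\<lambda>p q. f p \<le> f q) ps \<longrightarrow>
        (\<forall>i < length ps. f (ps ! i) \<le> S_f f (\<Prod>j<i. (ps ! j) ^ multiplicity (ps ! j) n) + 1))"

definition convenient :: "(nat \<Rightarrow> nat) \<Rightarrow> bool" where
  "convenient f \<longleftrightarrow> (\<forall>n. weakly_f_practical f n \<longrightarrow> f_practical f n)"

end

theory Submission
  imports Defs
begin

text \<open>
  For a prime \<open>p\<close> not dividing \<open>m\<close>, the divisors of \<open>m p\<^sup>k\<^sup>+\<^sup>1\<close> are those of \<open>m p\<^sup>k\<close>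
  together with \<open>p\<^sup>k\<^sup>+\<^sup>1\<close> times those of \<open>m\<close>, so
  \<open>S\<^sub>f(m p\<^sup>k\<^sup>+\<^sup>1) = S\<^sub>f(m p\<^sup>k) + f(p\<^sup>k\<^sup>+\<^sup>1) S\<^sub>f(m)\<close>. If \<open>m\<close> and \<open>m p\<^sup>k\<close> are \<open>f\<close>-practical,
  then \<open>m p\<^sup>k\<^sup>+\<^sup>1\<close> is \<open>f\<close>-practical iff \<open>f(p\<^sup>k\<^sup>+\<^sup>1) \<le> S\<^sub>f(m p\<^sup>k) + 1\<close>: division with remainder
  by \<open>f(p\<^sup>k\<^sup>+\<^sup>1)\<close> gives one direction, and for the other every divisor not dividing
  \<open>m p\<^sup>k\<close> has \<open>f\<close>-value at least \<open>f(p\<^sup>k\<^sup>+\<^sup>1)\<close>, so \<open>S\<^sub>f(m p\<^sup>k) + 1\<close> is not representable.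

  Under the condition of the theorem a weakly \<open>f\<close>-practical number is therefore built up
  prime power by prime power, in the order of the weak condition, through \<open>f\<close>-practical
  numbers. Conversely, if \<open>m\<close> is \<open>f\<close>-practical and \<open>f(p) \<le> S\<^sub>f(m) + 1\<close>, then \<open>m p\<^sup>k\<^sup>+\<^sup>1\<close> is
  weakly \<open>f\<close>-practical: for each of its primes \<open>q\<close>, \<open>f(q) - 1\<close> is a sum of \<open>f\<close>-values of
  divisors of \<open>m\<close>, and monotonicity on prime powers forces the primes of these divisors to
  have \<open>f\<close>-value below \<open>f(q)\<close>.
\<close>

lemma multiplicative_one: "multiplicative f \<Longrightarrow> f 1 = 1"
  unfolding multiplicative_def by blast

lemma multiplicativeD:
  "multiplicative f \<Longrightarrow> a > 0 \<Longrightarrow> b > 0 \<Longrightarrow> coprime a b \<Longrightarrow> f (a * b) = f a * f b"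
  unfolding multiplicative_def by blast

lemma coprime_prime_pos: "prime p \<Longrightarrow> coprime m p \<Longrightarrow> (m::nat) > 0"
  by (rule gr0I) auto

lemma multiplicative_mult_prime_power:
  assumes "multiplicative f" "prime p" "coprime m p" "d dvd m"
  shows "f (d * p ^ j) = f d * f (p ^ j)"
proof -
  have "d > 0" using coprime_prime_pos[OF assms(2,3)] assms(4) by (auto intro: gr0I)
  moreover have "coprime d (p ^ j)"
    using coprime_divisors[OF assms(4) dvd_refl] assms(3) by simp
  ultimately show ?thesis
    using multiplicativeD[OF assms(1)] prime_gt_0_nat[OF assms(2)] by simp
qed

lemma f_le_S_f: "d dvd n \<Longrightarrow> n > 0 \<Longrightarrow> f d \<le> S_f f n"
  unfolding S_f_def by (rule member_le_sum) auto

lemma S_f_mono_dvd: "a dvd b \<Longrightarrow> b > 0 \<Longrightarrow> S_f f a \<le> S_f f b"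
  unfolding S_f_def by (rule sum_mono2) (auto intro: dvd_trans)

lemma f_practical_pos: "f_practical f n \<Longrightarrow> n > 0"
  unfolding f_practical_def by blast

lemma f_practical_one: "f 1 = 1 \<Longrightarrow> f_practical f 1"
  unfolding f_practical_def S_f_def by (auto intro!: exI[of _ "{1}"])

lemma f_practical_sum_divisors:
  assumes "f_practical f n" "t \<le> S_f f n"
  obtains D where "D \<subseteq> {d. d dvd n}" "t = (\<Sum>d\<in>D. f d)"
proof (cases "t = 0")
  case True
  then show ?thesis using that[of "{}"] by simp
next
  case False
  then have "1 \<le> t \<and> t \<le> S_f f n" using assms(2) by simp
  then show ?thesis using assms(1) that unfolding f_practical_def by blast
qed

lemma divisors_mult_prime_power_Suc:
  fixes m p :: nat
  assumes "prime p" "coprime m p"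
  shows "{d. d dvd m * p ^ Suc k} = {d. d dvd m * p ^ k} \<union> (\<lambda>d. d * p ^ Suc k) ` {d. d dvd m}"
proof (intro equalityI subsetI)
  fix d assume "d \<in> {d. d dvd m * p ^ Suc k}"
  then obtain b c where bc: "d = b * c" "b dvd m" "c dvd p ^ Suc k"
    using division_decomp by blast
  then obtain i where i: "i \<le> Suc k" "c = p ^ i"
    using divides_primepow_nat[OF assms(1)] by blast
  show "d \<in> {d. d dvd m * p ^ k} \<union> (\<lambda>d. d * p ^ Suc k) ` {d. d dvd m}"
  proof (cases "i \<le> k")
    case True
    then show ?thesis using bc i by (simp add: le_imp_power_dvd mult_dvd_mono)
  next
    case False
    then show ?thesis using bc i by (auto simp: le_Suc_eq)
  qed
qed (auto intro: dvd_trans[of _ "m * p ^ k"] simp: mult_dvd_mono)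

lemma divisors_mult_prime_power_disjoint:
  fixes m p :: nat
  assumes "prime p" "coprime m p"
  shows "{d. d dvd m * p ^ k} \<inter> (\<lambda>d. d * p ^ Suc k) ` {d. d dvd m} = {}"
proof (rule ccontr)
  assume "\<not> ?thesis"
  then obtain b where "b * p ^ Suc k dvd m * p ^ k" by blast
  then have "p ^ k * (b * p) dvd p ^ k * m" by (simp add: ac_simps)
  then have "p dvd m"
    using prime_gt_0_nat[OF assms(1)] by (auto dest: dvd_mult_right)
  then show False using coprime_common_divisor[OF assms(2) _ dvd_refl] assms(1) by auto
qed

lemma sum_f_divisors_mult_prime_power_Suc:
  fixes m p :: nat
  assumes "multiplicative f" "prime p" "coprime m p"
    and E: "E \<subseteq> {d. d dvd m * p ^ k}" and D: "D \<subseteq> {d. d dvd m}"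
  shows "(\<Sum>d\<in>E \<union> (\<lambda>d. d * p ^ Suc k) ` D. f d) = (\<Sum>d\<in>E. f d) + f (p ^ Suc k) * (\<Sum>d\<in>D. f d)"
proof -
  have "m > 0" "p > 0" using coprime_prime_pos[OF assms(2,3)] prime_gt_0_nat[OF assms(2)] .
  then have fin: "finite D" "finite E"
    using finite_subset[OF D] finite_subset[OF E] by simp_all
  have "E \<inter> (\<lambda>d. d * p ^ Suc k) ` D = {}"
    using divisors_mult_prime_power_disjoint[OF assms(2,3), of k] D E by blast
  then have "(\<Sum>d\<in>E \<union> (\<lambda>d. d * p ^ Suc k) ` D. f d)
      = (\<Sum>d\<in>E. f d) + (\<Sum>d\<in>(\<lambda>d. d * p ^ Suc k) ` D. f d)"
    using fin by (simp add: sum.union_disjoint)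
  also have "(\<Sum>d\<in>(\<lambda>d. d * p ^ Suc k) ` D. f d) = (\<Sum>d\<in>D. f (d * p ^ Suc k))"
    using \<open>p > 0\<close> by (subst sum.reindex) (auto simp: inj_on_def)
  also have "\<dots> = (\<Sum>d\<in>D. f d * f (p ^ Suc k))"
    using D by (intro sum.cong refl multiplicative_mult_prime_power[OF assms(1-3)]) auto
  finally show ?thesis by (simp add: sum_distrib_right mult.commute)
qed

lemma S_f_mult_prime_power_Suc:
  fixes m p :: nat
  assumes "multiplicative f" "prime p" "coprime m p"
  shows "S_f f (m * p ^ Suc k) = S_f f (m * p ^ k) + f (p ^ Suc k) * S_f f m"
  unfolding S_f_def divisors_mult_prime_power_Suc[OF assms(2,3)]
  by (rule sum_f_divisors_mult_prime_power_Suc[OF assms]) simp_all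

lemma le_add_mult_decompose:
  fixes t a M B :: nat
  assumes "t \<le> B + a * M" "a \<le> B + 1"
  obtains x y where "t = a * x + y" "x \<le> M" "y \<le> B"
proof (cases "t div a \<le> M")
  case True
  have "t mod a \<le> B"
  proof (cases "a = 0")
    case False
    then have "t mod a < a" by simp
    then show ?thesis using assms(2) by linarith
  qed (use assms(1) in simp)
  then show ?thesis using that[of "t div a" "t mod a"] True by simp
next
  case False
  then have "a * M \<le> a * (t div a)" by simp
  also have "\<dots> \<le> t" by simp
  finally show ?thesis using that[of M "t - a * M"] assms(1) by simp
qed

lemma f_practical_mult_prime_power_Suc:
  fixes m p :: nat
  assumes f: "multiplicative f" and p: "prime p" "coprime m p"
    and m: "f_practical f m" and mpk: "f_practical f (m * p ^ k)"
    and bound: "f (p ^ Suc k) \<le> S_f f (m * p ^ k) + 1"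
  shows "f_practical f (m * p ^ Suc k)"
proof -
  have "\<exists>D. D \<subseteq> {d. d dvd m * p ^ Suc k} \<and> t = (\<Sum>d\<in>D. f d)"
    if "t \<le> S_f f (m * p ^ Suc k)" for t
  proof -
    have "t \<le> S_f f (m * p ^ k) + f (p ^ Suc k) * S_f f m"
      using that S_f_mult_prime_power_Suc[OF f p] by simp
    then obtain x y where xy: "t = f (p ^ Suc k) * x + y" "x \<le> S_f f m" "y \<le> S_f f (m * p ^ k)"
      using le_add_mult_decompose[OF _ bound] by blast
    obtain D where D: "D \<subseteq> {d. d dvd m}" "x = (\<Sum>d\<in>D. f d)"
      using f_practical_sum_divisors[OF m xy(2)] .
    obtain E where E: "E \<subseteq> {d. d dvd m * p ^ k}" "y = (\<Sum>d\<in>E. f d)"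
      using f_practical_sum_divisors[OF mpk xy(3)] .
    have "E \<union> (\<lambda>d. d * p ^ Suc k) ` D \<subseteq> {d. d dvd m * p ^ Suc k}"
      using divisors_mult_prime_power_Suc[OF p, of k] D E by blast
    moreover have "t = (\<Sum>d\<in>E \<union> (\<lambda>d. d * p ^ Suc k) ` D. f d)"
      using sum_f_divisors_mult_prime_power_Suc[OF f p E(1) D(1)] xy(1) D(2) E(2) by simp
    ultimately show ?thesis by blast
  qed
  moreover have "m * p ^ Suc k > 0"
    using f_practical_pos[OF m] prime_gt_0_nat[OF p(1)] by simp
  ultimately show ?thesis unfolding f_practical_def by blast
qed

lemma f_practical_mult_prime_power:
  fixes m p :: nat
  assumes "multiplicative f" "prime p" "coprime m p" "f_practical f m"
    and "\<And>k. f (p ^ Suc k) \<le> S_f f (m * p ^ k) + 1"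
  shows "f_practical f (m * p ^ k)"
proof (induction k)
  case 0
  then show ?case using assms(4) by simp
next
  case (Suc k)
  then show ?case using f_practical_mult_prime_power_Suc[OF assms(1-4)] assms(5) by blast
qed

lemma prod_lessThan_nth_eq_prod_set_take:
  assumes "distinct xs" "i \<le> length xs"
  shows "(\<Prod>j<i. g (xs ! j)) = prod g (set (take i xs))"
proof -
  have "(\<Prod>j<i. g (xs ! j)) = (\<Prod>j<length (take i xs). g (take i xs ! j))"
    using assms(2) by (intro prod.cong) auto
  also have "\<dots> = prod g (set (take i xs))"
    by (rule prod.reindex_bij_betw, rule bij_betw_nth) (use assms in auto)
  finally show ?thesis .
qed

lemma sorted_wrt_key_less_in_set_take:
  fixes g :: "'a \<Rightarrow> 'b::linorder"
  assumes "sorted_wrt (\<lambda>x y. g x \<le> g y) xs" "x \<in> set xs" "i < length xs" "g x < g (xs ! i)"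
  shows "x \<in> set (take i xs)"
proof -
  obtain j where j: "j < length xs" "x = xs ! j" using assms(2) by (auto simp: in_set_conv_nth)
  have "\<not> i \<le> j"
  proof
    assume "i \<le> j"
    then have "g (xs ! i) \<le> g (xs ! j)"
      using sorted_wrt_nth_less[OF assms(1) _ j(1)] by (cases "i = j") auto
    then show False using assms(4) j(2) by simp
  qed
  then show ?thesis using j by (auto simp: in_set_conv_nth)
qed

text \<open>
  For \<open>c = f(p\<^sub>i\<^sub>+\<^sub>1)\<close> this divides the \<open>m\<^sub>i\<close> of the weak condition, however primes of equal
  \<open>f\<close>-value are ordered.
\<close>

definition small_part :: "(nat \<Rightarrow> nat) \<Rightarrow> nat \<Rightarrow> nat \<Rightarrow> nat" where
  "small_part f c n = (\<Prod>r\<in>{r\<in>prime_factors n. f r < c}. r ^ multiplicity r n)"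

lemma small_part_pos: "small_part f c n > 0"
  unfolding small_part_def by (rule prod_pos) (auto intro: prime_gt_0_nat)

lemma small_part_dvd:
  assumes "n > 0"
  shows "small_part f c n dvd n"
proof -
  have "small_part f c n dvd (\<Prod>r\<in>prime_factors n. r ^ multiplicity r n)"
    unfolding small_part_def by (rule prod_dvd_prod_subset) auto
  also have "\<dots> = n" using prod_prime_factors[of n] assms by simp
  finally show ?thesis .
qed

lemma prime_dvd_small_part:
  assumes "prime r" "r dvd small_part f c n"
  shows "r \<in> prime_factors n" "f r < c"
proof -
  obtain s where s: "s \<in> prime_factors n" "f s < c" "r dvd s ^ multiplicity s n"
    using assms prime_dvd_prod_iff[of "{r\<in>prime_factors n. f r < c}" r]
    unfolding small_part_def by auto
  then have "r = s"
    using prime_dvd_power[OF assms(1) s(3)] primes_dvd_imp_eq assms(1) by auto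
  then show "r \<in> prime_factors n" "f r < c" using s by simp_all
qed

lemma dvd_small_part:
  fixes d n :: nat
  assumes "d dvd n" "n > 0" "\<And>r. prime r \<Longrightarrow> r dvd d \<Longrightarrow> f r < c"
  shows "d dvd small_part f c n"
proof (rule multiplicity_le_imp_dvd)
  show "d \<noteq> 0" using assms by auto
  fix s :: nat assume s: "prime s"
  have small: "multiplicity s (small_part f c n)
      = (if s \<in> {r\<in>prime_factors n. f r < c} then multiplicity s n else 0)"
    unfolding small_part_def by (rule multiplicity_prod_prime_powers) (auto simp: s)
  show "multiplicity s d \<le> multiplicity s (small_part f c n)"
  proof (cases "s dvd d")
    case True
    then have "s \<in> {r\<in>prime_factors n. f r < c}"
      using assms s dvd_trans[OF True assms(1)] by (auto simp: prime_factors_dvd)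
    moreover have "multiplicity s d \<le> multiplicity s n"
      using assms by (intro dvd_imp_multiplicity_le) auto
    ultimately show ?thesis using small by simp
  qed (simp add: not_dvd_imp_multiplicity_0)
qed

lemma small_part_dvd_small_part:
  fixes m n :: nat
  assumes "m dvd n" "n > 0"
  shows "small_part f c m dvd small_part f c n"
proof (rule dvd_small_part)
  have "m > 0" using assms by (auto intro: gr0I)
  then show "small_part f c m dvd n"
    using small_part_dvd assms(1) dvd_trans by blast
qed (use assms prime_dvd_small_part in auto)

lemma weakly_f_practicalI:
  fixes n :: nat
  assumes "n > 0" "\<And>q. q \<in> prime_factors n \<Longrightarrow> f q \<le> S_f f (small_part f (f q) n) + 1"
  shows "weakly_f_practical f n"
  unfolding weakly_f_practical_def
proof (intro conjI allI impI \<open>n > 0\<close>)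
  fix ps :: "nat list" and i
  assume ps: "distinct ps \<and> set ps = prime_factors n \<and> sorted_wrt (\<lambda>p q. f p \<le> f q) ps"
    and i: "i < length ps"
  let ?m = "\<Prod>r\<in>set (take i ps). r ^ multiplicity r n"
  have "small_part f (f (ps ! i)) n dvd ?m"
    unfolding small_part_def using ps i sorted_wrt_key_less_in_set_take[of f ps]
    by (intro prod_dvd_prod_subset) auto
  moreover have "?m > 0"
    using ps by (intro prod_pos) (auto dest: in_set_takeD intro: prime_gt_0_nat)
  ultimately have "S_f f (small_part f (f (ps ! i)) n) \<le> S_f f ?m"
    by (rule S_f_mono_dvd)
  moreover have "f (ps ! i) \<le> S_f f (small_part f (f (ps ! i)) n) + 1"
    using assms(2) ps i nth_mem by blast
  ultimately show "f (ps ! i) \<le> S_f f (\<Prod>j<i. (ps ! j) ^ multiplicity (ps ! j) n) + 1"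
    using prod_lessThan_nth_eq_prod_set_take[of ps i "\<lambda>r. r ^ multiplicity r n"] ps i by simp
qed

lemma f_practical_of_weakly_f_practical:
  fixes n :: nat
  assumes f: "multiplicative f"
    and extend: "\<And>p m k. prime p \<Longrightarrow> f_practical f m \<Longrightarrow> coprime m p \<Longrightarrow>
      f p \<le> S_f f m + 1 \<Longrightarrow> f (p ^ Suc k) \<le> S_f f (m * p ^ k) + 1"
    and weak: "weakly_f_practical f n"
  shows "f_practical f n"
proof -
  have "n > 0" using weak unfolding weakly_f_practical_def by simp
  define ps where "ps = sort_key f (sorted_list_of_set (prime_factors n))"
  have ps: "distinct ps" "set ps = prime_factors n" "sorted_wrt (\<lambda>p q. f p \<le> f q) ps"
    unfolding ps_def using sorted_sort_key[of f] by (simp_all add: sorted_map)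
  define m where "m i = (\<Prod>j<i. (ps ! j) ^ multiplicity (ps ! j) n)" for i
  have "f_practical f (m i)" if "i \<le> length ps" for i
    using that
  proof (induction i)
    case 0
    then show ?case using f_practical_one[of f] multiplicative_one[OF f] by (simp add: m_def)
  next
    case (Suc i)
    have q: "prime (ps ! i)" using Suc.prems ps(2) nth_mem by fastforce
    have "coprime (ps ! j) (ps ! i)" if "j < i" for j
      using that Suc.prems ps nth_eq_iff_index_eq nth_mem
      by (intro primes_coprime q) fastforce+
    then have "coprime (m i) (ps ! i)" unfolding m_def by (auto intro: prod_coprime_left)
    moreover have "f (ps ! i) \<le> S_f f (m i) + 1"
      using weak ps Suc.prems unfolding weakly_f_practical_def m_def by simp
    ultimately have "f_practical f (m i * ps ! i ^ multiplicity (ps ! i) n)"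
      using f_practical_mult_prime_power[OF f q] extend[OF q] Suc by simp
    then show ?case by (simp add: m_def)
  qed
  moreover have "m (length ps) = n"
    using prod_lessThan_nth_eq_prod_set_take[of ps "length ps" "\<lambda>r. r ^ multiplicity r n"]
      prod_prime_factors[of n] \<open>n > 0\<close> ps by (simp add: m_def)
  ultimately show ?thesis by (metis order_refl)
qed

locale prime_power_monotone =
  fixes f :: "nat \<Rightarrow> nat"
  assumes multiplicative: "multiplicative f"
    and prime_power_mono: "\<And>p k. prime p \<Longrightarrow> k \<ge> 1 \<Longrightarrow> f (p ^ (k - 1)) \<le> f (p ^ k)"
begin

lemma prime_power_le_prime_power: "prime p \<Longrightarrow> i \<le> j \<Longrightarrow> f (p ^ i) \<le> f (p ^ j)"
  using lift_Suc_mono_le[of "\<lambda>k. f (p ^ k)"] prime_power_mono[of p "Suc _"] by simp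

lemma prime_power_pos: "prime p \<Longrightarrow> f (p ^ k) \<ge> 1"
  using prime_power_le_prime_power[of p 0 k] multiplicative_one[OF multiplicative] by simp

lemma split_prime_power:
  fixes n r :: nat
  assumes "prime r" "n > 0"
  obtains y where "n = r ^ multiplicity r n * y" "y > 0" "f n = f (r ^ multiplicity r n) * f y"
proof -
  obtain y where y: "n = r ^ multiplicity r n * y" "\<not> r dvd y"
    using multiplicity_decompose'[of n r] assms by (metis not_prime_unit not_gr0)
  have "y > 0" using y(1) assms(2) by (metis gr0I mult_0_right)
  moreover have "coprime (r ^ multiplicity r n) y"
    using y(2) assms(1) by (metis coprime_commute prime_imp_power_coprime)
  ultimately have "f (r ^ multiplicity r n * y) = f (r ^ multiplicity r n) * f y"
    using multiplicativeD[OF multiplicative] prime_gt_0_nat[OF assms(1)] by simp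
  then have "f n = f (r ^ multiplicity r n) * f y" using y(1) by metis
  then show ?thesis using that y(1) \<open>y > 0\<close> by blast
qed

lemma f_pos: "n > 0 \<Longrightarrow> f n \<ge> 1"
proof (induction n rule: less_induct)
  case (less n)
  show ?case
  proof (cases "n = 1")
    case True
    then show ?thesis using multiplicative_one[OF multiplicative] by simp
  next
    case False
    then obtain r where r: "prime r" "r dvd n" using prime_factor_nat by blast
    obtain y where y: "n = r ^ multiplicity r n * y" "y > 0"
        "f n = f (r ^ multiplicity r n) * f y"
      using split_prime_power[OF r(1) less.prems] .
    have "multiplicity r n > 0"
      using r less.prems by (simp add: prime_multiplicity_gt_zero_iff)
    then have "r ^ multiplicity r n > 1"
      using prime_gt_1_nat[OF r(1)] one_less_power by blast
    then have "y < n" using y(1,2) by (metis mult_less_cancel2 nat_mult_1)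
    then show ?thesis
      using less.IH y prime_power_pos[OF r(1)] by (metis le_trans mult_le_mono nat_mult_1)
  qed
qed

lemma prime_le_of_dvd:
  fixes n r :: nat
  assumes "prime r" "r dvd n" "n > 0"
  shows "f r \<le> f n"
proof -
  obtain y where y: "n = r ^ multiplicity r n * y" "y > 0" "f n = f (r ^ multiplicity r n) * f y"
    using split_prime_power[OF assms(1,3)] .
  have "f r \<le> f (r ^ multiplicity r n)"
    using prime_power_le_prime_power[OF assms(1), of 1] assms
    by (simp add: prime_multiplicity_gt_zero_iff Suc_le_eq)
  then show ?thesis using y f_pos[OF y(2)] by (metis le_trans mult_le_mono nat_mult_1_right order_refl)
qed

lemma le_S_f_small_part:
  fixes m :: nat
  assumes m: "f_practical f m" and c: "c \<le> S_f f m + 1"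
  shows "c \<le> S_f f (small_part f c m) + 1"
proof -
  have "m > 0" using f_practical_pos[OF m] .
  have "c - 1 \<le> S_f f m" using c by simp
  then obtain D where D: "D \<subseteq> {d. d dvd m}" "c - 1 = (\<Sum>d\<in>D. f d)"
    by (rule f_practical_sum_divisors[OF m])
  have "finite D" using finite_subset[OF D(1)] \<open>m > 0\<close> by simp
  have "d dvd small_part f c m" if "d \<in> D" for d
  proof (rule dvd_small_part)
    show "d dvd m" using that D(1) by auto
    then have "d > 0" using \<open>m > 0\<close> by (auto intro: gr0I)
    fix r :: nat assume "prime r" "r dvd d"
    then have "f r \<le> f d" using prime_le_of_dvd \<open>d > 0\<close> by blast
    also have "f d \<le> c - 1" using D(2) member_le_sum[OF that, of f] \<open>finite D\<close> by simp
    finally show "f r < c" using \<open>prime r\<close> f_pos[of r] prime_gt_0_nat by fastforce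
  qed (use \<open>m > 0\<close> in simp)
  then have "(\<Sum>d\<in>D. f d) \<le> S_f f (small_part f c m)"
    unfolding S_f_def by (intro sum_mono2) (use small_part_pos in auto)
  then show ?thesis using D(2) by simp
qed

lemma weakly_f_practical_mult_prime_power:
  fixes m p :: nat
  assumes p: "prime p" "coprime m p" and m: "f_practical f m" and fp: "f p \<le> S_f f m + 1"
  shows "weakly_f_practical f (m * p ^ Suc k)"
proof (rule weakly_f_practicalI)
  have "m > 0" using f_practical_pos[OF m] .
  then show n: "m * p ^ Suc k > 0" using prime_gt_0_nat[OF p(1)] by simp
  fix q assume q: "q \<in> prime_factors (m * p ^ Suc k)"
  have "f q \<le> S_f f m + 1"
  proof (cases "q = p")
    case False
    have "prime q" "q dvd m * p ^ Suc k" using q by (auto simp: in_prime_factors_iff)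
    moreover have "\<not> q dvd p ^ Suc k"
    proof
      assume "q dvd p ^ Suc k"
      then have "q dvd p" using prime_dvd_power \<open>prime q\<close> by blast
      then show False using primes_dvd_imp_eq[OF \<open>prime q\<close> p(1)] False by blast
    qed
    ultimately have "q dvd m" using prime_dvd_mult_iff by blast
    then show ?thesis using f_le_S_f[OF _ \<open>m > 0\<close>, of q f] by simp
  qed (use fp in simp)
  then have "f q \<le> S_f f (small_part f (f q) m) + 1"
    by (rule le_S_f_small_part[OF m])
  moreover have "S_f f (small_part f (f q) m) \<le> S_f f (small_part f (f q) (m * p ^ Suc k))"
    by (rule S_f_mono_dvd[OF small_part_dvd_small_part[OF _ n] small_part_pos]) simp
  ultimately show "f q \<le> S_f f (small_part f (f q) (m * p ^ Suc k)) + 1" by linarith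
qed

lemma prime_power_bound_of_f_practical:
  fixes m p :: nat
  assumes p: "prime p" "coprime m p" and practical: "f_practical f (m * p ^ Suc k)"
  shows "f (p ^ Suc k) \<le> S_f f (m * p ^ k) + 1"
proof (rule ccontr)
  assume "\<not> ?thesis"
  then have big: "S_f f (m * p ^ k) + 1 < f (p ^ Suc k)" by simp
  have "m > 0" using coprime_prime_pos[OF p] .
  then have "1 \<le> S_f f m"
    using f_le_S_f[of 1 m f] multiplicative_one[OF multiplicative] by simp
  then have "f (p ^ Suc k) \<le> f (p ^ Suc k) * S_f f m" by simp
  then have "S_f f (m * p ^ k) + 1 \<le> S_f f (m * p ^ Suc k)"
    using S_f_mult_prime_power_Suc[OF multiplicative p, of k] big by linarith
  then obtain D where D: "D \<subseteq> {d. d dvd m * p ^ Suc k}" "S_f f (m * p ^ k) + 1 = (\<Sum>d\<in>D. f d)"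
    by (rule f_practical_sum_divisors[OF practical])
  have "m * p ^ Suc k > 0" using \<open>m > 0\<close> prime_gt_0_nat[OF p(1)] by simp
  then have "finite D" using finite_subset[OF D(1)] by simp
  have "d dvd m * p ^ k" if "d \<in> D" for d
  proof (rule ccontr)
    assume "\<not> d dvd m * p ^ k"
    moreover have "d \<in> {d. d dvd m * p ^ Suc k}" using D(1) that by blast
    ultimately obtain e where e: "e dvd m" "d = e * p ^ Suc k"
      unfolding divisors_mult_prime_power_Suc[OF p, of k] by blast
    have "e > 0" using e(1) \<open>m > 0\<close> by (auto intro: gr0I)
    have "f d = f e * f (p ^ Suc k)"
      unfolding e(2) by (rule multiplicative_mult_prime_power[OF multiplicative p e(1)])
    then have "f (p ^ Suc k) \<le> f d" using f_pos[OF \<open>e > 0\<close>] by simp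
    moreover have "f d \<le> S_f f (m * p ^ k) + 1"
      using D(2) member_le_sum[OF that, of f] \<open>finite D\<close> by simp
    ultimately show False using big by simp
  qed
  moreover have "finite {d. d dvd m * p ^ k}"
    using \<open>m > 0\<close> prime_gt_0_nat[OF p(1)] by simp
  ultimately have "(\<Sum>d\<in>D. f d) \<le> S_f f (m * p ^ k)"
    unfolding S_f_def by (intro sum_mono2) auto
  then show False using D(2) by simp
qed

end

theorem theorem3p3:
  fixes f :: "nat \<Rightarrow> nat"
  assumes "multiplicative f"
    and "\<And>p k. prime p \<Longrightarrow> k \<ge> 1 \<Longrightarrow> f (p ^ (k - 1)) \<le> f (p ^ k)"
  shows "convenient f \<longleftrightarrow>
    (\<forall>p m. prime p \<longrightarrow> f_practical f m \<longrightarrow> coprime m p \<longrightarrow> f p \<le> S_f f m + 1 \<longrightarrow>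
       (\<forall>k. f (p ^ (k + 1)) \<le> S_f f (m * p ^ k) + 1))"
    (is "_ \<longleftrightarrow> ?extension_condition")
proof -
  interpret prime_power_monotone f
    using assms by unfold_locales
  show ?thesis
  proof
    assume "convenient f"
    then have "f_practical f (m * p ^ Suc k)"
      if "prime p" "f_practical f m" "coprime m p" "f p \<le> S_f f m + 1" for p m k
      using weakly_f_practical_mult_prime_power that unfolding convenient_def by blast
    then show ?extension_condition
      using prime_power_bound_of_f_practical by simp
  next
    assume ?extension_condition
    then show "convenient f"
      unfolding convenient_def using f_practical_of_weakly_f_practical[OF assms(1)] by simp
  qed
qed

end
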